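(* Let $(X,\mathcal F)$ be a measurable space, $\mu\colon\mathcal F\to[0,\infty]$ a submodular monotone measure, $A\in\mathcal F$, $p>1$ and $q$ with $1/p+1/q=1$. Let $f,g,h\colon X\to[0,\infty)$ be measurable and put $a=\int_A gf^p\,d\mu$, $b=\int_A hf^p\,d\mu$, assumed to lie in $(0,\infty)$. Then $$\int_A f\,d\mu\le 2^{1/p}H_{pq}(a,b),\qquad H_{pq}(a,b)=(ab)^{1/p}\Big(\int_A\frac{1}{(bg+ah)^{q-1}}\,d\mu\Big)^{1/q},$$ with the convention $1/0=\infty$. Moreover, equality holds if $(bg+ah)^q f^p=\gamma$ on $X$ for some constant $\gamma\ge0$, provided that either $\mu$ is modular or $gf^p$ and $hf^p$ are comonotone. All integrals are Choquet integrals.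
   Context: A monotone measure is a map $\mu\colon\mathcal F\to[0,\infty]$ with $\mu(\emptyset)=0$, $\mu(X)>0$ and $\mu(A)\le\mu(B)$ for $A\subset B$. It is submodular if $\mu(A\cap B)+\mu(A\cup B)\le\mu(A)+\mu(B)$ for all $A,B\in\mathcal F$, and modular if equality always holds. The Choquet integral of a measurable $f\colon X\to[0,\infty]$ on $A\in\mathcal F$ is $\int_A f\,d\mu=\int_0^\infty\mu(A\cap\{f\ge t\})\,dt$. Functions $\phi,\psi$ are comonotone if $(\phi(x)-\phi(y))(\psi(x)-\psi(y))\ge0$ for all $x,y$. *)

theory Defs
  imports "HOL-Analysis.Analysis"
begin

definition monotone_measure :: "'a measure \<Rightarrow> ('a set \<Rightarrow> ennreal) \<Rightarrow> bool" where
  "monotone_measure M \<mu> \<longleftrightarrow>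
     \<mu> {} = 0 \<and> \<mu> (space M) > 0 \<and>
     (\<forall>A\<in>sets M. \<forall>B\<in>sets M. A \<subseteq> B \<longrightarrow> \<mu> A \<le> \<mu> B)"

definition submodular :: "'a measure \<Rightarrow> ('a set \<Rightarrow> ennreal) \<Rightarrow> bool" where
  "submodular M \<mu> \<longleftrightarrow>
     (\<forall>A\<in>sets M. \<forall>B\<in>sets M. \<mu> (A \<inter> B) + \<mu> (A \<union> B) \<le> \<mu> A + \<mu> B)"

definition modular :: "'a measure \<Rightarrow> ('a set \<Rightarrow> ennreal) \<Rightarrow> bool" where
  "modular M \<mu> \<longleftrightarrow>
     (\<forall>A\<in>sets M. \<forall>B\<in>sets M. \<mu> (A \<inter> B) + \<mu> (A \<union> B) = \<mu> A + \<mu> B)"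

definition choquet :: "'a measure \<Rightarrow> ('a set \<Rightarrow> ennreal) \<Rightarrow> 'a set \<Rightarrow> ('a \<Rightarrow> ennreal) \<Rightarrow> ennreal" where
  "choquet M \<mu> A f =
     (\<integral>\<^sup>+ t. indicator {0..} t * \<mu> (A \<inter> {x \<in> space M. ennreal t \<le> f x}) \<partial>lborel)"

definition comonotone :: "'a set \<Rightarrow> ('a \<Rightarrow> real) \<Rightarrow> ('a \<Rightarrow> real) \<Rightarrow> bool" where
  "comonotone X \<phi> \<psi> \<longleftrightarrow>
     (\<forall>x\<in>X. \<forall>y\<in>X. (\<phi> x - \<phi> y) * (\<psi> x - \<psi> y) \<ge> 0)"

text \<open>1/(b g + a h)^(q-1) with the convention 1/0 = oo.\<close>
definition recip_pow :: "real \<Rightarrow> real \<Rightarrow> ennreal" where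
  "recip_pow q s = (if s = 0 then \<infinity> else ennreal (1 / (s powr (q - 1))))"

definition Hpq :: "real \<Rightarrow> real \<Rightarrow> real \<Rightarrow> real \<Rightarrow> ennreal \<Rightarrow> ennreal" where
  "Hpq p q a b I = (if I = \<infinity> then \<infinity>
      else ennreal ((a * b) powr (1 / p) * (enn2real I) powr (1 / q)))"

end

theory Submission
  imports Defs
begin

text \<open>
  With \<open>w = b g + a h\<close> one has \<open>f = (f\<^sup>p w)\<^bsup>1/p\<^esup> (w\<^bsup>1-q\<^esup>)\<^bsup>1/q\<^esup>\<close> where \<open>w > 0\<close>, and
  the set \<open>{w = 0}\<close> is null as soon as \<open>\<integral> w\<^bsup>1-q\<^esup>\<close> is finite. Hoelder's inequality for the
  Choquet integral of a submodular measure (scaled Young inequality plus subadditivity and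
  homogeneity) therefore bounds \<open>\<integral> f\<close> by \<open>(\<integral> f\<^sup>p w)\<^bsup>1/p\<^esup> (\<integral> w\<^bsup>1-q\<^esup>)\<^bsup>1/q\<^esup>\<close>, and subadditivity
  gives \<open>\<integral> f\<^sup>p w \<le> b a + a b\<close>.
  If \<open>w\<^sup>q f\<^sup>p = \<gamma>\<close>, then \<open>f\<close> and \<open>f\<^sup>p w\<close> are multiples of \<open>w\<^bsup>1-q\<^esup>\<close>, and superadditivity
  (valid for modular measures and for comonotone integrands) turns \<open>\<integral> f\<^sup>p w \<le> 2 a b\<close> into an
  equality, which gives the reverse inequality.
  Sub- and superadditivity are first proved for \<open>\<nat>\<close>-valued functions, removing one unit layer
  at a time and telescoping the (sub)modular inequalities of their level sets, and then transferred
  to real functions by quantizing them on a grid of mesh \<open>\<delta> \<rightarrow> 0\<close>.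
\<close>

lemma monotone_measureD:
  "monotone_measure M \<mu> \<Longrightarrow> X \<in> sets M \<Longrightarrow> Y \<in> sets M \<Longrightarrow> X \<subseteq> Y \<Longrightarrow> \<mu> X \<le> \<mu> Y"
  unfolding monotone_measure_def by blast

lemma monotone_measure_empty: "monotone_measure M \<mu> \<Longrightarrow> \<mu> {} = 0"
  unfolding monotone_measure_def by blast

lemma modular_or_nested:
  assumes "modular M \<mu> \<or> X \<subseteq> Y \<or> Y \<subseteq> X" and "X \<in> sets M" "Y \<in> sets M"
  shows "\<mu> (X \<inter> Y) + \<mu> (X \<union> Y) = \<mu> X + \<mu> Y"
  using assms unfolding modular_def
  by (elim disjE) (simp_all add: Int_absorb1 Int_absorb2 Un_absorb1 Un_absorb2 add.commute)

lemma comonotone_transform: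
  assumes co: "comonotone X F H"
    and F: "\<forall>x\<in>X. \<forall>y\<in>X. F x \<le> F y \<longrightarrow> F' x \<le> F' y"
    and H: "\<forall>x\<in>X. \<forall>y\<in>X. H x \<le> H y \<longrightarrow> H' x \<le> H' y"
  shows "comonotone X F' H'"
proof -
  have le: "(F' x - F' y) * (H' x - H' y) \<ge> 0" if xy: "x \<in> X" "y \<in> X" and "F x \<le> F y" for x y
  proof (cases "H x \<le> H y")
    case True
    then show ?thesis using xy \<open>F x \<le> F y\<close> F H by (intro mult_nonpos_nonpos) auto
  next
    case False
    have "(F x - F y) * (H x - H y) \<ge> 0" using co xy unfolding comonotone_def by blast
    with False have "F y \<le> F x" by (simp add: zero_le_mult_iff)
    then have "F' x = F' y" using xy \<open>F x \<le> F y\<close> F by (meson order.antisym)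
    then show ?thesis by simp
  qed
  show ?thesis
    unfolding comonotone_def
  proof (intro ballI)
    fix x y assume "x \<in> X" "y \<in> X"
    show "(F' x - F' y) * (H' x - H' y) \<ge> 0"
    proof (cases "F x \<le> F y")
      case True
      then show ?thesis using le \<open>x \<in> X\<close> \<open>y \<in> X\<close> by blast
    next
      case False
      then have "(F' y - F' x) * (H' y - H' x) \<ge> 0" using le \<open>x \<in> X\<close> \<open>y \<in> X\<close> by simp
      then show ?thesis by (simp add: algebra_simps)
    qed
  qed
qed

lemma sum_telescope_le:
  fixes S T Y :: "nat \<Rightarrow> 'b::ordered_comm_monoid_add"
  assumes "\<And>k. k < N \<Longrightarrow> S k + Y (Suc k) \<le> T k + Y k"
  shows "(\<Sum>k<N. S k) + Y N \<le> (\<Sum>k<N. T k) + Y 0"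
  using assms
proof (induction N)
  case (Suc N)
  have "(\<Sum>k<Suc N. S k) + Y (Suc N) = (\<Sum>k<N. S k) + (S N + Y (Suc N))"
    by (simp add: ac_simps)
  also have "\<dots> \<le> (\<Sum>k<N. S k) + (T N + Y N)"
    using Suc.prems[of N] by (intro add_left_mono) simp
  also have "\<dots> = ((\<Sum>k<N. S k) + Y N) + T N"
    by (simp add: ac_simps)
  also have "\<dots> \<le> ((\<Sum>k<N. T k) + Y 0) + T N"
    using Suc by (intro add_right_mono) simp
  finally show ?case by (simp add: ac_simps)
qed simp

lemma sum_telescope_eq:
  fixes S T Y :: "nat \<Rightarrow> 'b::comm_monoid_add"
  assumes "\<And>k. k < N \<Longrightarrow> S k + Y (Suc k) = T k + Y k"
  shows "(\<Sum>k<N. S k) + Y N = (\<Sum>k<N. T k) + Y 0"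
  using assms
proof (induction N)
  case (Suc N)
  have "(\<Sum>k<Suc N. S k) + Y (Suc N) = (\<Sum>k<N. S k) + (S N + Y (Suc N))"
    by (simp add: ac_simps)
  also have "\<dots> = ((\<Sum>k<N. S k) + Y N) + T N"
    using Suc.prems[of N] by (simp add: ac_simps)
  also have "\<dots> = ((\<Sum>k<N. T k) + Y 0) + T N"
    using Suc by simp
  finally show ?case by (simp add: ac_simps)
qed simp

definition nat_level :: "'a measure \<Rightarrow> 'a set \<Rightarrow> ('a \<Rightarrow> nat) \<Rightarrow> nat \<Rightarrow> 'a set" where
  "nat_level M A u j = A \<inter> {x\<in>space M. j \<le> u x}"

text \<open>For nat-valued \<open>u\<close> this is the Choquet integral of \<open>u\<close> on \<open>A\<close>.\<close>
definition layer_sum :: "'a measure \<Rightarrow> ('a set \<Rightarrow> ennreal) \<Rightarrow> 'a set \<Rightarrow> ('a \<Rightarrow> nat) \<Rightarrow> ennreal" where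
  "layer_sum M \<mu> A u = (\<Sum>k. \<mu> (nat_level M A u (Suc k)))"

lemma nat_level_sets:
  assumes "A \<in> sets M" and [measurable]: "u \<in> M \<rightarrow>\<^sub>M count_space UNIV"
  shows "nat_level M A u j \<in> sets M"
  using assms(1) unfolding nat_level_def by measurable

lemma layer_sum_eq_SUP: "layer_sum M \<mu> A u = (SUP N. \<Sum>k<N. \<mu> (nat_level M A u (Suc k)))"
  unfolding layer_sum_def by (rule suminf_eq_SUP)

lemma layer_sum_bounded:
  assumes "monotone_measure M \<mu>" and "\<forall>x. u x \<le> N"
  shows "layer_sum M \<mu> A u = (\<Sum>k<N. \<mu> (nat_level M A u (Suc k)))"
  unfolding layer_sum_def
proof (rule suminf_finite)
  fix k assume "k \<notin> {..<N}"
  then have "nat_level M A u (Suc k) = {}" using assms(2) unfolding nat_level_def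
    by (auto simp: not_less_eq_eq[symmetric] intro: order_trans)
  then show "\<mu> (nat_level M A u (Suc k)) = 0" using monotone_measure_empty[OF assms(1)] by simp
qed simp

lemma layer_sum_mono:
  assumes mon: "monotone_measure M \<mu>" and A: "A \<in> sets M"
    and "u \<in> M \<rightarrow>\<^sub>M count_space UNIV" "v \<in> M \<rightarrow>\<^sub>M count_space UNIV"
    and "\<forall>x\<in>space M. u x \<le> v x"
  shows "layer_sum M \<mu> A u \<le> layer_sum M \<mu> A v"
  unfolding layer_sum_def
  by (intro suminf_le summableI monotone_measureD[OF mon] nat_level_sets A assms(3,4))
     (use assms(5) in \<open>auto simp: nat_level_def\<close>)

lemma layer_sum_diff_one: "layer_sum M \<mu> A (\<lambda>x. v x - 1) + \<mu> (nat_level M A v 1) = layer_sum M \<mu> A v"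
proof -
  have "nat_level M A (\<lambda>x. v x - 1) (Suc k) = nat_level M A v (Suc (Suc k))" for k
    unfolding nat_level_def by auto
  moreover have "(\<lambda>k. \<mu> (nat_level M A v (Suc k))) sums
      ((\<Sum>k. \<mu> (nat_level M A v (Suc (Suc k)))) + \<mu> (nat_level M A v (Suc 0)))"
    using sums_Suc[of "\<lambda>k. \<mu> (nat_level M A v (Suc k))"] by (simp add: summable_sums summableI)
  ultimately show ?thesis
    unfolding layer_sum_def by (simp add: sums_iff)
qed

lemma partial_layer_sum_le: "(\<Sum>k<N. \<mu> (nat_level M A u (Suc k))) \<le> layer_sum M \<mu> A u"
  unfolding layer_sum_eq_SUP by (rule SUP_upper) simp

lemma nat_level_add_diff_one:
  "nat_level M A (\<lambda>x. u x + (v x - 1)) (Suc k) \<union> (nat_level M A (\<lambda>x. u x + (v x - 1)) k \<inter> nat_level M A v 1)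
     = nat_level M A (\<lambda>x. u x + v x) (Suc k)"
  "nat_level M A (\<lambda>x. u x + (v x - 1)) (Suc k) \<inter> (nat_level M A (\<lambda>x. u x + (v x - 1)) k \<inter> nat_level M A v 1)
     = nat_level M A (\<lambda>x. u x + (v x - 1)) (Suc k) \<inter> nat_level M A v 1"
  "nat_level M A (\<lambda>x. u x + (v x - 1)) 0 \<inter> nat_level M A v 1 = nat_level M A v 1"
  unfolding nat_level_def by auto

text \<open>Lowering \<open>v\<close> by one unit removes the layer \<open>{v \<ge> 1}\<close>; comparing the level sets of
  \<open>u + v\<close> and \<open>u + (v - 1)\<close> with (sub)modularity and telescoping shows what this costs.\<close>
lemma layer_sum_add_le_diff_one:
  assumes sub: "submodular M \<mu>" and A: "A \<in> sets M"
    and [measurable]: "u \<in> M \<rightarrow>\<^sub>M count_space UNIV" "v \<in> M \<rightarrow>\<^sub>M count_space UNIV"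
  shows "layer_sum M \<mu> A (\<lambda>x. u x + v x)
    \<le> layer_sum M \<mu> A (\<lambda>x. u x + (v x - 1)) + \<mu> (nat_level M A v 1)"
proof -
  let ?F = "\<lambda>x. u x + (v x - 1)" and ?E = "nat_level M A v 1"
  let ?Y = "\<lambda>k. \<mu> (nat_level M A ?F k \<inter> ?E)"
  have sets: "nat_level M A ?F k \<in> sets M" "?E \<in> sets M" for k
    by (intro nat_level_sets A; measurable)+
  have step: "\<mu> (nat_level M A (\<lambda>x. u x + v x) (Suc k)) + ?Y (Suc k)
      \<le> \<mu> (nat_level M A ?F (Suc k)) + ?Y k" for k
    using sub sets unfolding submodular_def nat_level_add_diff_one(1,2)[of M A u v k, symmetric]
    by (metis (no_types, lifting) sets.Int add.commute)
  show ?thesis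
    unfolding layer_sum_eq_SUP[of _ _ _ "\<lambda>x. u x + v x"]
  proof (rule SUP_least)
    fix N
    have "(\<Sum>k<N. \<mu> (nat_level M A (\<lambda>x. u x + v x) (Suc k)))
        \<le> (\<Sum>k<N. \<mu> (nat_level M A (\<lambda>x. u x + v x) (Suc k))) + ?Y N"
      by simp
    also have "\<dots> \<le> (\<Sum>k<N. \<mu> (nat_level M A ?F (Suc k))) + ?Y 0"
      by (rule sum_telescope_le) (rule step)
    also have "\<dots> \<le> layer_sum M \<mu> A ?F + \<mu> ?E"
      unfolding nat_level_add_diff_one(3) by (intro add_right_mono partial_layer_sum_le)
    finally show "(\<Sum>k<N. \<mu> (nat_level M A (\<lambda>x. u x + v x) (Suc k)))
        \<le> layer_sum M \<mu> A ?F + \<mu> ?E" .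
  qed
qed

lemma nat_level_add_diff_one_nested:
  assumes "comonotone (space M) (\<lambda>x. real (u x)) (\<lambda>x. real (v x))"
  shows "nat_level M A (\<lambda>x. u x + (v x - 1)) (Suc k) \<subseteq> nat_level M A (\<lambda>x. u x + (v x - 1)) k \<inter> nat_level M A v 1
    \<or> nat_level M A (\<lambda>x. u x + (v x - 1)) k \<inter> nat_level M A v 1 \<subseteq> nat_level M A (\<lambda>x. u x + (v x - 1)) (Suc k)"
proof (rule ccontr)
  assume "\<not> ?thesis"
  moreover have "nat_level M A (\<lambda>x. u x + (v x - 1)) (Suc k) \<subseteq> nat_level M A (\<lambda>x. u x + (v x - 1)) k"
    unfolding nat_level_def by auto
  ultimately obtain x y where "x \<in> nat_level M A (\<lambda>x. u x + (v x - 1)) (Suc k)" "x \<notin> nat_level M A v 1"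
    and "y \<in> nat_level M A (\<lambda>x. u x + (v x - 1)) k \<inter> nat_level M A v 1"
      "y \<notin> nat_level M A (\<lambda>x. u x + (v x - 1)) (Suc k)"
    by blast
  then have x: "x \<in> space M" "v x = 0" "Suc k \<le> u x" and y: "y \<in> space M" "1 \<le> v y" "u y \<le> k"
    unfolding nat_level_def by auto
  have "(real (u y) - real (u x)) * (real (v y) - real (v x)) \<ge> 0"
    using assms x y unfolding comonotone_def by blast
  moreover have "real (u y) - real (u x) < 0" "real (v y) - real (v x) > 0" using x y by auto
  ultimately show False by (metis mult_neg_pos not_less)
qed

text \<open>Under comonotonicity the two sets in each submodular step are nested, so it is an equality.\<close>
lemma layer_sum_add_eq_diff_one:
  assumes mon: "monotone_measure M \<mu>" and A: "A \<in> sets M"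
    and [measurable]: "u \<in> M \<rightarrow>\<^sub>M count_space UNIV" "v \<in> M \<rightarrow>\<^sub>M count_space UNIV"
    and cond: "modular M \<mu> \<or> comonotone (space M) (\<lambda>x. real (u x)) (\<lambda>x. real (v x))"
    and bounded: "\<forall>x. u x + v x \<le> N"
  shows "layer_sum M \<mu> A (\<lambda>x. u x + v x)
    = layer_sum M \<mu> A (\<lambda>x. u x + (v x - 1)) + \<mu> (nat_level M A v 1)"
proof -
  let ?F = "\<lambda>x. u x + (v x - 1)" and ?E = "nat_level M A v 1"
  let ?Y = "\<lambda>k. \<mu> (nat_level M A ?F k \<inter> ?E)"
  have sets: "nat_level M A ?F k \<in> sets M" "?E \<in> sets M" for k
    by (intro nat_level_sets A; measurable)+
  have step: "\<mu> (nat_level M A (\<lambda>x. u x + v x) (Suc k)) + ?Y (Suc k)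
      = \<mu> (nat_level M A ?F (Suc k)) + ?Y k" for k
    using modular_or_nested[OF _ sets(1) sets.Int[OF sets(1,2)], of \<mu> "Suc k" k]
      cond nat_level_add_diff_one_nested[of M u v A k]
    unfolding nat_level_add_diff_one(1,2)[of M A u v k] by (auto simp: add.commute)
  have "\<not> (N \<le> u x + (v x - 1) \<and> 1 \<le> v x)" for x
    using bounded[rule_format, of x] by linarith
  then have "nat_level M A ?F N \<inter> ?E = {}"
    unfolding nat_level_def by auto
  then have "?Y N = 0" using monotone_measure_empty[OF mon] by simp
  moreover have "(\<Sum>k<N. \<mu> (nat_level M A (\<lambda>x. u x + v x) (Suc k))) + ?Y N
      = (\<Sum>k<N. \<mu> (nat_level M A ?F (Suc k))) + ?Y 0"
    by (rule sum_telescope_eq) (rule step)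
  ultimately have "(\<Sum>k<N. \<mu> (nat_level M A (\<lambda>x. u x + v x) (Suc k)))
      = (\<Sum>k<N. \<mu> (nat_level M A ?F (Suc k))) + \<mu> ?E"
    unfolding nat_level_add_diff_one(3) by simp
  moreover have "\<forall>x. ?F x \<le> N" using bounded by (meson add_le_mono diff_le_self le_refl le_trans)
  ultimately show ?thesis
    using bounded by (simp add: layer_sum_bounded[OF mon])
qed

lemma partial_layer_sum_le_truncated:
  assumes mon: "monotone_measure M \<mu>" and A: "A \<in> sets M"
    and w: "w \<in> M \<rightarrow>\<^sub>M count_space UNIV" and w': "w' \<in> M \<rightarrow>\<^sub>M count_space UNIV"
    and le: "\<forall>x\<in>space M. min (w x) N \<le> w' x"
  shows "(\<Sum>k<N. \<mu> (nat_level M A w (Suc k))) \<le> layer_sum M \<mu> A w'"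
proof -
  have "(\<Sum>k<N. \<mu> (nat_level M A w (Suc k))) = (\<Sum>k<N. \<mu> (nat_level M A (\<lambda>x. min (w x) N) (Suc k)))"
    by (intro sum.cong) (auto simp: nat_level_def)
  also have "\<dots> \<le> layer_sum M \<mu> A (\<lambda>x. min (w x) N)"
    by (rule partial_layer_sum_le)
  also have "\<dots> \<le> layer_sum M \<mu> A w'"
    using w w' le by (intro layer_sum_mono[OF mon A]) auto
  finally show ?thesis .
qed

lemma layer_sum_subadditive_bounded:
  assumes sub: "submodular M \<mu>" and A: "A \<in> sets M"
    and [measurable]: "u \<in> M \<rightarrow>\<^sub>M count_space UNIV" "v \<in> M \<rightarrow>\<^sub>M count_space UNIV"
    and "\<forall>x. v x \<le> m"
  shows "layer_sum M \<mu> A (\<lambda>x. u x + v x) \<le> layer_sum M \<mu> A u + layer_sum M \<mu> A v"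
  using assms(4,5)
proof (induction m arbitrary: v)
  case 0
  then show ?case by simp
next
  case (Suc m)
  note [measurable] = Suc.prems(1)
  have "layer_sum M \<mu> A (\<lambda>x. u x + v x)
      \<le> layer_sum M \<mu> A (\<lambda>x. u x + (v x - 1)) + \<mu> (nat_level M A v 1)"
    by (rule layer_sum_add_le_diff_one[OF sub A]) measurable
  also have "\<dots> \<le> layer_sum M \<mu> A u + layer_sum M \<mu> A (\<lambda>x. v x - 1) + \<mu> (nat_level M A v 1)"
    using Suc.prems by (intro add_right_mono Suc.IH) (auto simp: le_diff_conv)
  also have "\<dots> = layer_sum M \<mu> A u + layer_sum M \<mu> A v"
    by (simp only: add.assoc layer_sum_diff_one)
  finally show ?case .
qed

lemma layer_sum_subadditive:
  assumes mon: "monotone_measure M \<mu>" and sub: "submodular M \<mu>" and A: "A \<in> sets M"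
    and [measurable]: "u \<in> M \<rightarrow>\<^sub>M count_space UNIV" "v \<in> M \<rightarrow>\<^sub>M count_space UNIV"
  shows "layer_sum M \<mu> A (\<lambda>x. u x + v x) \<le> layer_sum M \<mu> A u + layer_sum M \<mu> A v"
  unfolding layer_sum_eq_SUP[of _ _ _ "\<lambda>x. u x + v x"]
proof (rule SUP_least)
  fix N
  have "(\<Sum>k<N. \<mu> (nat_level M A (\<lambda>x. u x + v x) (Suc k))) \<le> layer_sum M \<mu> A (\<lambda>x. u x + min (v x) N)"
    by (rule partial_layer_sum_le_truncated[OF mon A]) auto
  also have "\<dots> \<le> layer_sum M \<mu> A u + layer_sum M \<mu> A (\<lambda>x. min (v x) N)"
    by (rule layer_sum_subadditive_bounded[OF sub A, where m = N]) auto
  also have "\<dots> \<le> layer_sum M \<mu> A u + layer_sum M \<mu> A v"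
    by (intro add_left_mono layer_sum_mono[OF mon A]) auto
  finally show "(\<Sum>k<N. \<mu> (nat_level M A (\<lambda>x. u x + v x) (Suc k)))
      \<le> layer_sum M \<mu> A u + layer_sum M \<mu> A v" .
qed

lemma layer_sum_superadditive_bounded:
  assumes mon: "monotone_measure M \<mu>" and A: "A \<in> sets M"
    and u: "u \<in> M \<rightarrow>\<^sub>M count_space UNIV" "\<forall>x. u x \<le> N"
    and v: "v \<in> M \<rightarrow>\<^sub>M count_space UNIV" "\<forall>x. v x \<le> m"
    and cond: "modular M \<mu> \<or> comonotone (space M) (\<lambda>x. real (u x)) (\<lambda>x. real (v x))"
  shows "layer_sum M \<mu> A u + layer_sum M \<mu> A v \<le> layer_sum M \<mu> A (\<lambda>x. u x + v x)"
  using v cond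
proof (induction m arbitrary: v)
  case 0
  then show ?case by (simp add: layer_sum_def nat_level_def monotone_measure_empty[OF mon])
next
  case (Suc m)
  note [measurable] = u(1) Suc.prems(1)
  have cond': "modular M \<mu> \<or> comonotone (space M) (\<lambda>x. real (u x)) (\<lambda>x. real (v x - 1))"
    using Suc.prems(3) comonotone_transform[of "space M" "\<lambda>x. real (u x)" "\<lambda>x. real (v x)"
        "\<lambda>x. real (u x)" "\<lambda>x. real (v x - 1)"]
    by (auto simp: diff_le_mono)
  have bounded: "\<forall>x. u x + v x \<le> N + Suc m"
    using u(2) Suc.prems(2) by (metis add_le_mono add_Suc_right)
  have "layer_sum M \<mu> A u + layer_sum M \<mu> A v
      = layer_sum M \<mu> A u + layer_sum M \<mu> A (\<lambda>x. v x - 1) + \<mu> (nat_level M A v 1)"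
    by (simp only: add.assoc layer_sum_diff_one)
  also have "\<dots> \<le> layer_sum M \<mu> A (\<lambda>x. u x + (v x - 1)) + \<mu> (nat_level M A v 1)"
    using Suc.prems cond' by (intro add_right_mono Suc.IH) (auto simp: le_diff_conv)
  also have "\<dots> = layer_sum M \<mu> A (\<lambda>x. u x + v x)"
    by (rule layer_sum_add_eq_diff_one[symmetric, OF mon A u(1) Suc.prems(1,3) bounded])
  finally show ?case .
qed

lemma layer_sum_superadditive:
  assumes mon: "monotone_measure M \<mu>" and A: "A \<in> sets M"
    and [measurable]: "u \<in> M \<rightarrow>\<^sub>M count_space UNIV" "v \<in> M \<rightarrow>\<^sub>M count_space UNIV"
    and cond: "modular M \<mu> \<or> comonotone (space M) (\<lambda>x. real (u x)) (\<lambda>x. real (v x))"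
  shows "layer_sum M \<mu> A u + layer_sum M \<mu> A v \<le> layer_sum M \<mu> A (\<lambda>x. u x + v x)"
proof -
  have inc: "incseq (\<lambda>N. \<Sum>k<N. \<mu> (nat_level M A w (Suc k)))" for w
    by (rule incseq_sumI) simp
  have "layer_sum M \<mu> A u + layer_sum M \<mu> A v
      = (SUP N. (\<Sum>k<N. \<mu> (nat_level M A u (Suc k))) + (\<Sum>k<N. \<mu> (nat_level M A v (Suc k))))"
    unfolding layer_sum_eq_SUP by (rule ennreal_SUP_add[symmetric, OF inc inc])
  also have "\<dots> \<le> layer_sum M \<mu> A (\<lambda>x. u x + v x)"
  proof (rule SUP_least)
    fix N
    have cond': "modular M \<mu> \<or> comonotone (space M) (\<lambda>x. real (min (u x) N)) (\<lambda>x. real (min (v x) N))"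
      using cond comonotone_transform[of "space M" "\<lambda>x. real (u x)" "\<lambda>x. real (v x)"
          "\<lambda>x. real (min (u x) N)" "\<lambda>x. real (min (v x) N)"]
      by (auto simp: min.coboundedI1)
    have "(\<Sum>k<N. \<mu> (nat_level M A u (Suc k))) + (\<Sum>k<N. \<mu> (nat_level M A v (Suc k)))
        \<le> layer_sum M \<mu> A (\<lambda>x. min (u x) N) + layer_sum M \<mu> A (\<lambda>x. min (v x) N)"
      by (intro add_mono partial_layer_sum_le_truncated[OF mon A]) auto
    also have "\<dots> \<le> layer_sum M \<mu> A (\<lambda>x. min (u x) N + min (v x) N)"
      by (rule layer_sum_superadditive_bounded[OF mon A, where N = N and m = N]) (simp_all add: cond')
    also have "\<dots> \<le> layer_sum M \<mu> A (\<lambda>x. u x + v x)"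
      by (rule layer_sum_mono[OF mon A]) (simp_all add: add_mono)
    finally show "(\<Sum>k<N. \<mu> (nat_level M A u (Suc k))) + (\<Sum>k<N. \<mu> (nat_level M A v (Suc k)))
        \<le> layer_sum M \<mu> A (\<lambda>x. u x + v x)" .
  qed
  finally show ?thesis .
qed

lemma borel_measurable_antimono_ennreal:
  fixes G :: "real \<Rightarrow> ennreal"
  assumes "\<And>s t. s \<le> t \<Longrightarrow> G t \<le> G s"
  shows "G \<in> borel_measurable borel"
proof (rule borel_measurableI_greater)
  fix y
  have "is_interval {x. y < G x}"
    unfolding is_interval_1 using assms by (auto intro: order.strict_trans2)
  then show "{x \<in> space borel. y < G x} \<in> sets borel"
    using real_interval_borel_measurable by simp
qed

lemma mem_grid_interval_iff:
  fixes t r \<delta> :: real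
  assumes "\<delta> > 0" and "r \<le> t"
  shows "t \<in> {r + real k * \<delta> ..< r + real (Suc k) * \<delta>} \<longleftrightarrow> k = nat \<lfloor>(t - r) / \<delta>\<rfloor>"
proof -
  have "t \<in> {r + real k * \<delta> ..< r + real (Suc k) * \<delta>} \<longleftrightarrow> real k \<le> (t - r) / \<delta> \<and> (t - r) / \<delta> < real k + 1"
    using assms(1) by (auto simp: pos_le_divide_eq pos_divide_less_eq algebra_simps)
  also have "\<dots> \<longleftrightarrow> \<lfloor>(t - r) / \<delta>\<rfloor> = int k"
    by (simp add: floor_eq_iff)
  also have "\<dots> \<longleftrightarrow> k = nat \<lfloor>(t - r) / \<delta>\<rfloor>"
    using assms by auto
  finally show ?thesis .
qed

lemma suminf_indicator_single:
  fixes a :: "nat \<Rightarrow> ennreal"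
  assumes "\<And>k. t \<in> I k \<longleftrightarrow> k = k0"
  shows "(\<Sum>k. indicator (I k) t * a k) = a k0"
proof -
  have "(\<lambda>k. indicator (I k) t * a k) = (\<lambda>k. if k = k0 then a k else 0)"
    using assms by (auto simp: indicator_def)
  then show ?thesis using sums_single[of k0 a] sums_unique by metis
qed

lemma nn_integral_grid_step:
  fixes \<delta> r :: real and c :: "nat \<Rightarrow> ennreal"
  assumes "\<delta> > 0"
  shows "(\<integral>\<^sup>+t. (\<Sum>k. indicator {r + real k * \<delta> ..< r + real (Suc k) * \<delta>} t * c k) \<partial>lborel)
     = (\<Sum>k. ennreal \<delta> * c k)"
proof -
  have "(\<integral>\<^sup>+t. indicator {r + real k * \<delta> ..< r + real (Suc k) * \<delta>} t * c k \<partial>lborel) = ennreal \<delta> * c k" for k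
    using nn_integral_cmult_indicator[of "{r + real k * \<delta> ..< r + real (Suc k) * \<delta>}" lborel "c k"] assms
    by (simp add: mult.commute algebra_simps)
  then show ?thesis by (simp add: nn_integral_suminf)
qed

lemma nn_integral_antimono_ge_lower_sum:
  fixes G :: "real \<Rightarrow> ennreal"
  assumes G: "\<And>s t. s \<le> t \<Longrightarrow> G t \<le> G s" and \<delta>: "\<delta> > 0"
  shows "(\<Sum>k. ennreal \<delta> * G (real (Suc k) * \<delta>)) \<le> (\<integral>\<^sup>+t. indicator {0..} t * G t \<partial>lborel)"
proof -
  have "(\<Sum>k. ennreal \<delta> * G (real (Suc k) * \<delta>))
      = (\<integral>\<^sup>+t. (\<Sum>k. indicator {0 + real k * \<delta> ..< 0 + real (Suc k) * \<delta>} t * G (real (Suc k) * \<delta>)) \<partial>lborel)"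
    by (rule nn_integral_grid_step[symmetric, OF \<delta>])
  also have "\<dots> \<le> (\<integral>\<^sup>+t. indicator {0..} t * G t \<partial>lborel)"
  proof (rule nn_integral_mono)
    fix t :: real
    show "(\<Sum>k. indicator {0 + real k * \<delta> ..< 0 + real (Suc k) * \<delta>} t * G (real (Suc k) * \<delta>))
        \<le> indicator {0..} t * G t"
    proof (cases "t \<ge> 0")
      case True
      define k0 where "k0 = nat \<lfloor>(t - 0) / \<delta>\<rfloor>"
      have k0: "t \<in> {0 + real k * \<delta> ..< 0 + real (Suc k) * \<delta>} \<longleftrightarrow> k = k0" for k
        unfolding k0_def by (rule mem_grid_interval_iff[OF \<delta> True])
      have "t \<le> real (Suc k0) * \<delta>" using k0[of k0] by simp
      then show ?thesis using True G suminf_indicator_single[OF k0] by simp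
    next
      case False
      have "indicator {0 + real k * \<delta> ..< 0 + real (Suc k) * \<delta>} t = (0::ennreal)" for k
      proof -
        have "0 \<le> real k * \<delta>" using \<delta> by simp
        then show ?thesis using False by (auto simp: indicator_def)
      qed
      then show ?thesis by simp
    qed
  qed
  finally show ?thesis .
qed

lemma nn_integral_antimono_le_upper_sum:
  fixes G :: "real \<Rightarrow> ennreal"
  assumes G: "\<And>s t. s \<le> t \<Longrightarrow> G t \<le> G s" and \<delta>: "\<delta> > 0"
  shows "(\<integral>\<^sup>+t. indicator {r..} t * G t \<partial>lborel) \<le> (\<Sum>k. ennreal \<delta> * G (r + real k * \<delta>))"
proof -
  have "(\<integral>\<^sup>+t. indicator {r..} t * G t \<partial>lborel)
     \<le> (\<integral>\<^sup>+t. (\<Sum>k. indicator {r + real k * \<delta> ..< r + real (Suc k) * \<delta>} t * G (r + real k * \<delta>)) \<partial>lborel)"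
  proof (rule nn_integral_mono)
    fix t :: real
    show "indicator {r..} t * G t
        \<le> (\<Sum>k. indicator {r + real k * \<delta> ..< r + real (Suc k) * \<delta>} t * G (r + real k * \<delta>))"
    proof (cases "t \<ge> r")
      case True
      define k0 where "k0 = nat \<lfloor>(t - r) / \<delta>\<rfloor>"
      have k0: "t \<in> {r + real k * \<delta> ..< r + real (Suc k) * \<delta>} \<longleftrightarrow> k = k0" for k
        unfolding k0_def by (rule mem_grid_interval_iff[OF \<delta> True])
      then have "r + real k0 * \<delta> \<le> t" by (metis atLeastLessThan_iff)
      then show ?thesis using True G suminf_indicator_single[OF k0] by simp
    qed simp
  qed
  also have "\<dots> = (\<Sum>k. ennreal \<delta> * G (r + real k * \<delta>))"
    by (rule nn_integral_grid_step[OF \<delta>])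
  finally show ?thesis .
qed

lemma nn_integral_antimono_eq_SUP:
  fixes G :: "real \<Rightarrow> ennreal"
  assumes G: "\<And>s t. s \<le> t \<Longrightarrow> G t \<le> G s" and c: "c > 0"
  shows "(\<integral>\<^sup>+t. indicator {0..} t * G t \<partial>lborel)
    = (SUP n. \<integral>\<^sup>+t. indicator {c / real (Suc n)..} t * G t \<partial>lborel)"
proof -
  have inc: "incseq (\<lambda>n t. indicator {c / real (Suc n)..} t * G t)"
  proof (intro monoI le_funI)
    fix m n :: nat and t assume "m \<le> n"
    then have "c / real (Suc n) \<le> c / real (Suc m)" using c by (intro divide_left_mono) auto
    then show "indicator {c / real (Suc m)..} t * G t \<le> indicator {c / real (Suc n)..} t * G t"
      by (auto simp: indicator_def)
  qed
  have sup: "(SUP n. indicator {c / real (Suc n)..} t * G t) = indicator {0<..} t * G t" for t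
  proof (rule antisym)
    show "(SUP n. indicator {c / real (Suc n)..} t * G t) \<le> indicator {0<..} t * G t"
    proof (rule SUP_least)
      fix n
      have "0 < c / real (Suc n)" using c by simp
      then show "indicator {c / real (Suc n)..} t * G t \<le> indicator {0<..} t * G t"
        by (auto simp: indicator_def)
    qed
  next
    show "indicator {0<..} t * G t \<le> (SUP n. indicator {c / real (Suc n)..} t * G t)"
    proof (cases "t > 0")
      case True
      obtain n :: nat where "c / t < real n" using reals_Archimedean2 by blast
      then have "c / real (Suc n) \<le> t"
        using True c by (simp add: field_simps)
      then have "indicator {0<..} t * G t = indicator {c / real (Suc n)..} t * G t"
        using True by (simp add: indicator_def)
      then show ?thesis by (metis (mono_tags) SUP_upper UNIV_I)
    qed simp
  qed
  have "(\<integral>\<^sup>+t. indicator {0..} t * G t \<partial>lborel) = (\<integral>\<^sup>+t. indicator {0<..} t * G t \<partial>lborel)"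
    by (rule nn_integral_cong_AE)
       (use AE_lborel_singleton[of 0] in \<open>eventually_elim, auto simp: indicator_def\<close>)
  also have "\<dots> = (SUP n. \<integral>\<^sup>+t. indicator {c / real (Suc n)..} t * G t \<partial>lborel)"
    unfolding sup[symmetric]
    by (rule nn_integral_monotone_convergence_SUP[OF inc])
       (use borel_measurable_antimono_ennreal[OF G] in measurable)
  finally show ?thesis .
qed

definition choquet_real :: "'a measure \<Rightarrow> ('a set \<Rightarrow> ennreal) \<Rightarrow> 'a set \<Rightarrow> ('a \<Rightarrow> real) \<Rightarrow> ennreal" where
  "choquet_real M \<mu> A F = (\<integral>\<^sup>+t. indicator {0..} t * \<mu> (A \<inter> {x\<in>space M. t \<le> F x}) \<partial>lborel)"

lemma choquet_eq_choquet_real: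
  assumes "\<forall>x\<in>space M. F x \<ge> 0"
  shows "choquet M \<mu> A (\<lambda>x. ennreal (F x)) = choquet_real M \<mu> A F"
  unfolding choquet_def choquet_real_def
proof (rule nn_integral_cong)
  fix t :: real
  show "indicator {0..} t * \<mu> (A \<inter> {x \<in> space M. ennreal t \<le> ennreal (F x)})
      = indicator {0..} t * \<mu> (A \<inter> {x \<in> space M. t \<le> F x})"
  proof (cases "t \<ge> 0")
    case True
    then have "{x \<in> space M. ennreal t \<le> ennreal (F x)} = {x \<in> space M. t \<le> F x}"
      using assms by (auto simp: ennreal_le_iff)
    then show ?thesis by simp
  qed simp
qed

lemma choquet_real_cong:
  assumes "\<forall>x\<in>space M. F x = H x"
  shows "choquet_real M \<mu> A F = choquet_real M \<mu> A H"
proof -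
  have "{x\<in>space M. t \<le> F x} = {x\<in>space M. t \<le> H x}" for t using assms by auto
  then show ?thesis unfolding choquet_real_def by simp
qed

lemma choquet_real_level_antimono:
  fixes F :: "'a \<Rightarrow> real"
  assumes mon: "monotone_measure M \<mu>" and A: "A \<in> sets M" and [measurable]: "F \<in> borel_measurable M"
    and "s \<le> t"
  shows "\<mu> (A \<inter> {x\<in>space M. t \<le> F x}) \<le> \<mu> (A \<inter> {x\<in>space M. s \<le> F x})"
proof -
  have sets: "A \<inter> {x\<in>space M. r \<le> F x} \<in> sets M" for r using A by measurable
  show ?thesis using \<open>s \<le> t\<close> by (intro monotone_measureD[OF mon] sets) auto
qed

lemma choquet_real_mono:
  assumes mon: "monotone_measure M \<mu>" and A: "A \<in> sets M"
    and [measurable]: "F \<in> borel_measurable M" "H \<in> borel_measurable M"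
    and le: "\<forall>x\<in>space M. F x \<le> H x"
  shows "choquet_real M \<mu> A F \<le> choquet_real M \<mu> A H"
  unfolding choquet_real_def
  using A le by (intro nn_integral_mono mult_left_mono monotone_measureD[OF mon]) (auto intro: order_trans)

lemma choquet_real_cmult:
  assumes mon: "monotone_measure M \<mu>" and A: "A \<in> sets M"
    and [measurable]: "F \<in> borel_measurable M" and c: "c > 0"
  shows "choquet_real M \<mu> A (\<lambda>x. c * F x) = ennreal c * choquet_real M \<mu> A F"
proof -
  have "(\<lambda>t. \<mu> (A \<inter> {x\<in>space M. t \<le> c * F x})) \<in> borel_measurable borel"
    by (rule borel_measurable_antimono_ennreal, rule choquet_real_level_antimono[OF mon A]) auto
  then have "choquet_real M \<mu> A (\<lambda>x. c * F x)
      = ennreal c * (\<integral>\<^sup>+u. indicator {0..} (0 + c * u) * \<mu> (A \<inter> {x\<in>space M. 0 + c * u \<le> c * F x}) \<partial>lborel)"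
    unfolding choquet_real_def using c by (subst nn_integral_real_affine[where c = c and t = 0]) auto
  moreover have "indicator {0..} (c * u) = (indicator {0..} u :: ennreal)" for u
    using c by (auto simp: indicator_def zero_le_mult_iff)
  moreover have "{x\<in>space M. c * u \<le> c * F x} = {x\<in>space M. u \<le> F x}" for u
    using c by auto
  ultimately show ?thesis unfolding choquet_real_def by simp
qed

lemma choquet_real_null:
  assumes "\<And>t. t > 0 \<Longrightarrow> \<mu> (A \<inter> {x\<in>space M. t \<le> F x}) = 0"
  shows "choquet_real M \<mu> A F = 0"
proof -
  have "AE t in lborel. indicator {0..} t * \<mu> (A \<inter> {x\<in>space M. t \<le> F x}) = 0"
    using AE_lborel_singleton[of 0]
    by eventually_elim (use assms in \<open>auto simp: indicator_def less_le\<close>)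
  then show ?thesis
    unfolding choquet_real_def by (simp add: nn_integral_cong_AE[where v = "\<lambda>_. 0"])
qed

lemma choquet_real_eq_SUP:
  assumes mon: "monotone_measure M \<mu>" and A: "A \<in> sets M" and F: "F \<in> borel_measurable M"
    and c: "c > 0"
  shows "choquet_real M \<mu> A F
    = (SUP n. \<integral>\<^sup>+t. indicator {c / real (Suc n)..} t * \<mu> (A \<inter> {x\<in>space M. t \<le> F x}) \<partial>lborel)"
  unfolding choquet_real_def
  by (rule nn_integral_antimono_eq_SUP[OF choquet_real_level_antimono[OF mon A F] c])

text \<open>\<open>\<delta> * layer_sum M \<mu> A (quantize \<delta> F)\<close> is a Riemann sum for the Choquet integral of \<open>F\<close>.\<close>
definition quantize :: "real \<Rightarrow> ('a \<Rightarrow> real) \<Rightarrow> 'a \<Rightarrow> nat" where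
  "quantize \<delta> F x = nat \<lfloor>F x / \<delta>\<rfloor>"

lemma le_quantize_iff:
  assumes "\<delta> > 0" and "F x \<ge> 0"
  shows "j \<le> quantize \<delta> F x \<longleftrightarrow> real j * \<delta> \<le> F x"
proof -
  have "j \<le> quantize \<delta> F x \<longleftrightarrow> int j \<le> \<lfloor>F x / \<delta>\<rfloor>"
    using assms unfolding quantize_def by (simp add: le_nat_iff)
  also have "\<dots> \<longleftrightarrow> real j * \<delta> \<le> F x"
    using assms(1) by (simp add: le_floor_iff pos_le_divide_eq)
  finally show ?thesis .
qed

lemma quantize_measurable:
  assumes [measurable]: "F \<in> borel_measurable M"
  shows "quantize \<delta> F \<in> M \<rightarrow>\<^sub>M count_space UNIV"
  unfolding quantize_def by measurable

lemma quantize_mono: "\<delta> > 0 \<Longrightarrow> F x \<le> F y \<Longrightarrow> quantize \<delta> F x \<le> quantize \<delta> F y"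
  unfolding quantize_def by (intro nat_mono floor_mono divide_right_mono) auto

lemma layer_sum_quantize:
  assumes "\<delta> > 0" and "\<forall>x\<in>space M. F x \<ge> 0"
  shows "layer_sum M \<mu> A (quantize \<delta> F) = (\<Sum>k. \<mu> (A \<inter> {x\<in>space M. real (Suc k) * \<delta> \<le> F x}))"
proof -
  have "nat_level M A (quantize \<delta> F) j = A \<inter> {x\<in>space M. real j * \<delta> \<le> F x}" for j
    using assms(2) unfolding nat_level_def by (auto simp: le_quantize_iff[OF assms(1)])
  then show ?thesis unfolding layer_sum_def by simp
qed

lemma layer_sum_quantize_le_choquet_real:
  assumes mon: "monotone_measure M \<mu>" and A: "A \<in> sets M"
    and F: "F \<in> borel_measurable M" "\<forall>x\<in>space M. F x \<ge> 0" and \<delta>: "\<delta> > 0"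
  shows "ennreal \<delta> * layer_sum M \<mu> A (quantize \<delta> F) \<le> choquet_real M \<mu> A F"
  unfolding layer_sum_quantize[OF \<delta> F(2)] choquet_real_def ennreal_suminf_cmult[symmetric]
  by (rule nn_integral_antimono_ge_lower_sum[OF choquet_real_level_antimono[OF mon A F(1)] \<delta>])

lemma tail_le_layer_sum_quantize:
  assumes mon: "monotone_measure M \<mu>" and A: "A \<in> sets M"
    and F: "F \<in> borel_measurable M" "\<forall>x\<in>space M. F x \<ge> 0" and \<delta>: "\<delta> > 0"
  shows "(\<integral>\<^sup>+t. indicator {\<delta>..} t * \<mu> (A \<inter> {x\<in>space M. t \<le> F x}) \<partial>lborel)
    \<le> ennreal \<delta> * layer_sum M \<mu> A (quantize \<delta> F)"
proof -
  have "(\<integral>\<^sup>+t. indicator {\<delta>..} t * \<mu> (A \<inter> {x\<in>space M. t \<le> F x}) \<partial>lborel)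
      \<le> (\<Sum>k. ennreal \<delta> * \<mu> (A \<inter> {x\<in>space M. \<delta> + real k * \<delta> \<le> F x}))"
    by (rule nn_integral_antimono_le_upper_sum[OF choquet_real_level_antimono[OF mon A F(1)] \<delta>])
  also have "\<dots> = ennreal \<delta> * layer_sum M \<mu> A (quantize \<delta> F)"
    unfolding layer_sum_quantize[OF \<delta> F(2)] ennreal_suminf_cmult[symmetric]
    by (simp add: algebra_simps)
  finally show ?thesis .
qed

lemma quantize_add_le:
  assumes "\<delta> > 0" "F x \<ge> 0" "H x \<ge> 0"
  shows "quantize \<delta> F x + quantize \<delta> H x \<le> quantize \<delta> (\<lambda>x. F x + H x) x"
proof -
  have "\<lfloor>F x / \<delta>\<rfloor> + \<lfloor>H x / \<delta>\<rfloor> \<le> \<lfloor>(F x + H x) / \<delta>\<rfloor>"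
    by (simp add: add_divide_distrib le_floor_add)
  then show ?thesis using assms unfolding quantize_def by (simp add: nat_add_distrib[symmetric] nat_mono)
qed

lemma less_quantize_Suc:
  assumes "\<delta> > 0" "F x \<ge> 0"
  shows "F x < real (Suc (quantize \<delta> F x)) * \<delta>"
  using le_quantize_iff[of \<delta> F x "Suc (quantize \<delta> F x)"] assms by simp

lemma add_level_subset_quantize_level:
  assumes \<delta>: "\<delta> > 0" and "\<forall>x\<in>space M. F x \<ge> 0" "\<forall>x\<in>space M. H x \<ge> 0"
  shows "A \<inter> {x\<in>space M. 2 * \<delta> + real k * \<delta> \<le> F x + H x}
    \<subseteq> nat_level M A (\<lambda>x. quantize \<delta> F x + quantize \<delta> H x) (Suc k)"
proof
  fix x assume x: "x \<in> A \<inter> {x\<in>space M. 2 * \<delta> + real k * \<delta> \<le> F x + H x}"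
  then have "real (Suc (Suc k)) * \<delta> < real (Suc (quantize \<delta> F x) + Suc (quantize \<delta> H x)) * \<delta>"
    using less_quantize_Suc[OF \<delta>, of F x] less_quantize_Suc[OF \<delta>, of H x] assms(2,3)
    by (auto simp: algebra_simps)
  then have "Suc k \<le> quantize \<delta> F x + quantize \<delta> H x" using \<delta> by (simp only: mult_less_cancel_right) simp
  then show "x \<in> nat_level M A (\<lambda>x. quantize \<delta> F x + quantize \<delta> H x) (Suc k)"
    using x unfolding nat_level_def by auto
qed

lemma choquet_real_subadditive:
  assumes mon: "monotone_measure M \<mu>" and sub: "submodular M \<mu>" and A: "A \<in> sets M"
    and F: "F \<in> borel_measurable M" "\<forall>x\<in>space M. F x \<ge> 0"
    and H: "H \<in> borel_measurable M" "\<forall>x\<in>space M. H x \<ge> 0"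
  shows "choquet_real M \<mu> A (\<lambda>x. F x + H x) \<le> choquet_real M \<mu> A F + choquet_real M \<mu> A H"
proof -
  note [measurable] = F(1) H(1)
  have FH: "(\<lambda>x. F x + H x) \<in> borel_measurable M" by measurable
  show ?thesis
    unfolding choquet_real_eq_SUP[OF mon A FH, where c = 2, OF zero_less_numeral]
  proof (rule SUP_least)
    fix n
    define \<delta> where "\<delta> = 1 / real (Suc n)"
    have \<delta>: "\<delta> > 0" and two_\<delta>: "2 / real (Suc n) = 2 * \<delta>" unfolding \<delta>_def by simp_all
    let ?q = "\<lambda>x. quantize \<delta> F x + quantize \<delta> H x"
    have q[measurable]: "?q \<in> M \<rightarrow>\<^sub>M count_space UNIV"
      using quantize_measurable[OF F(1)] quantize_measurable[OF H(1)] by measurable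
    have grid: "A \<inter> {x\<in>space M. 2 * \<delta> + real k * \<delta> \<le> F x + H x} \<subseteq> nat_level M A ?q (Suc k)" for k
      using F(2) H(2) by (rule add_level_subset_quantize_level[OF \<delta>])
    have "(\<integral>\<^sup>+t. indicator {2 * \<delta>..} t * \<mu> (A \<inter> {x\<in>space M. t \<le> F x + H x}) \<partial>lborel)
      \<le> (\<Sum>k. ennreal \<delta> * \<mu> (A \<inter> {x\<in>space M. 2 * \<delta> + real k * \<delta> \<le> F x + H x}))"
      by (rule nn_integral_antimono_le_upper_sum[OF choquet_real_level_antimono[OF mon A FH] \<delta>])
    also have "\<dots> \<le> ennreal \<delta> * layer_sum M \<mu> A ?q"
      unfolding layer_sum_def ennreal_suminf_cmult[symmetric] using A
      by (intro suminf_le summableI mult_left_mono monotone_measureD[OF mon] grid nat_level_sets q) auto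
    also have "\<dots> \<le> ennreal \<delta> * (layer_sum M \<mu> A (quantize \<delta> F) + layer_sum M \<mu> A (quantize \<delta> H))"
      by (intro mult_left_mono layer_sum_subadditive[OF mon sub A] quantize_measurable F H) simp
    also have "\<dots> \<le> choquet_real M \<mu> A F + choquet_real M \<mu> A H"
      unfolding distrib_left by (intro add_mono layer_sum_quantize_le_choquet_real[OF mon A] \<delta> F H)
    finally show "(\<integral>\<^sup>+t. indicator {2 / real (Suc n)..} t * \<mu> (A \<inter> {x\<in>space M. t \<le> F x + H x}) \<partial>lborel)
      \<le> choquet_real M \<mu> A F + choquet_real M \<mu> A H" unfolding two_\<delta> .
  qed
qed

lemma incseq_tail_integral:
  fixes G :: "real \<Rightarrow> ennreal"
  assumes "c \<ge> 0"
  shows "incseq (\<lambda>n. \<integral>\<^sup>+t. indicator {c / real (Suc n)..} t * G t \<partial>lborel)"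
proof (intro monoI)
  fix m n :: nat assume "m \<le> n"
  then have "c / real (Suc n) \<le> c / real (Suc m)" using assms by (intro divide_left_mono) auto
  then show "(\<integral>\<^sup>+t. indicator {c / real (Suc m)..} t * G t \<partial>lborel)
      \<le> (\<integral>\<^sup>+t. indicator {c / real (Suc n)..} t * G t \<partial>lborel)"
    by (intro nn_integral_mono mult_right_mono) (auto simp: indicator_def)
qed

lemma layer_sum_quantize_add_le:
  assumes mon: "monotone_measure M \<mu>" and A: "A \<in> sets M" and \<delta>: "\<delta> > 0"
    and F: "F \<in> borel_measurable M" "\<forall>x\<in>space M. F x \<ge> 0"
    and H: "H \<in> borel_measurable M" "\<forall>x\<in>space M. H x \<ge> 0"
  shows "layer_sum M \<mu> A (\<lambda>x. quantize \<delta> F x + quantize \<delta> H x)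
    \<le> layer_sum M \<mu> A (quantize \<delta> (\<lambda>x. F x + H x))"
proof (rule layer_sum_mono[OF mon A])
  note [measurable] = quantize_measurable[OF F(1)] quantize_measurable[OF H(1)]
  show "(\<lambda>x. quantize \<delta> F x + quantize \<delta> H x) \<in> M \<rightarrow>\<^sub>M count_space UNIV" by measurable
  show "quantize \<delta> (\<lambda>x. F x + H x) \<in> M \<rightarrow>\<^sub>M count_space UNIV"
    using F(1) H(1) by (intro quantize_measurable) measurable
  show "\<forall>x\<in>space M. quantize \<delta> F x + quantize \<delta> H x \<le> quantize \<delta> (\<lambda>x. F x + H x) x"
    using F(2) H(2) by (simp add: quantize_add_le[OF \<delta>])
qed

lemma choquet_real_superadditive:
  assumes mon: "monotone_measure M \<mu>" and A: "A \<in> sets M"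
    and F: "F \<in> borel_measurable M" "\<forall>x\<in>space M. F x \<ge> 0"
    and H: "H \<in> borel_measurable M" "\<forall>x\<in>space M. H x \<ge> 0"
    and cond: "modular M \<mu> \<or> comonotone (space M) F H"
  shows "choquet_real M \<mu> A F + choquet_real M \<mu> A H \<le> choquet_real M \<mu> A (\<lambda>x. F x + H x)"
proof -
  note [measurable] = F(1) H(1)
  have FH: "(\<lambda>x. F x + H x) \<in> borel_measurable M" by measurable
  define I where "I W n = (\<integral>\<^sup>+t. indicator {1 / real (Suc n)..} t * \<mu> (A \<inter> {x\<in>space M. t \<le> W x}) \<partial>lborel)"
    for W :: "'a \<Rightarrow> real" and n
  have "choquet_real M \<mu> A F + choquet_real M \<mu> A H = (SUP n. I F n + I H n)"
    unfolding choquet_real_eq_SUP[OF mon A F(1) zero_less_one] choquet_real_eq_SUP[OF mon A H(1) zero_less_one] I_def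
    by (rule ennreal_SUP_add[symmetric]) (rule incseq_tail_integral, simp)+
  also have "\<dots> \<le> choquet_real M \<mu> A (\<lambda>x. F x + H x)"
  proof (rule SUP_least)
    fix n
    define \<delta> where "\<delta> = 1 / real (Suc n)"
    have \<delta>: "\<delta> > 0" unfolding \<delta>_def by simp
    have cond': "modular M \<mu> \<or>
        comonotone (space M) (\<lambda>x. real (quantize \<delta> F x)) (\<lambda>x. real (quantize \<delta> H x))"
      using cond comonotone_transform[of "space M" F H "\<lambda>x. real (quantize \<delta> F x)" "\<lambda>x. real (quantize \<delta> H x)"]
      by (auto simp: quantize_mono[OF \<delta>])
    have "I F n + I H n \<le> ennreal \<delta> * (layer_sum M \<mu> A (quantize \<delta> F) + layer_sum M \<mu> A (quantize \<delta> H))"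
      unfolding distrib_left I_def \<delta>_def[symmetric]
      by (intro add_mono tail_le_layer_sum_quantize[OF mon A] \<delta> F H)
    also have "\<dots> \<le> ennreal \<delta> * layer_sum M \<mu> A (\<lambda>x. quantize \<delta> F x + quantize \<delta> H x)"
      by (intro mult_left_mono layer_sum_superadditive[OF mon A] quantize_measurable F H cond') simp
    also have "\<dots> \<le> ennreal \<delta> * layer_sum M \<mu> A (quantize \<delta> (\<lambda>x. F x + H x))"
      by (intro mult_left_mono layer_sum_quantize_add_le[OF mon A \<delta> F H]) simp
    also have "\<dots> \<le> choquet_real M \<mu> A (\<lambda>x. F x + H x)"
      using F(2) H(2) by (intro layer_sum_quantize_le_choquet_real[OF mon A FH _ \<delta>]) auto
    finally show "I F n + I H n \<le> choquet_real M \<mu> A (\<lambda>x. F x + H x)" .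
  qed
  finally show ?thesis .
qed

lemma conjugate_exponents:
  fixes p q :: real
  assumes p: "p > 1" and pq: "1 / p + 1 / q = 1"
  shows "q > 1" "q - 1 = q / p" "p + q = p * q"
proof -
  have "1 / q = 1 - 1 / p" using pq by simp
  moreover have "0 < 1 - 1 / p" "1 - 1 / p < 1" using p by simp_all
  ultimately have "0 < 1 / q" "1 / q < 1" by simp_all
  then show "q > 1" by (simp add: divide_less_eq zero_less_divide_iff)
  then show "p + q = p * q" using pq p by (simp add: field_simps)
  then show "q - 1 = q / p" using p by (simp add: field_simps)
qed

lemma Youngs_inequality_scaled:
  fixes a b c p q :: real
  assumes p: "p > 1" and pq: "1 / p + 1 / q = 1" and ab: "a \<ge> 0" "b \<ge> 0" and c: "c > 0"
  shows "a * b \<le> c / p * a powr p + c powr (1 - q) / q * b powr q"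
proof -
  note q = conjugate_exponents[OF p pq]
  let ?a = "c powr (1 / p) * a" and ?b = "c powr (- (1 / p)) * b"
  have "a * b = ?a * ?b"
    using c by (simp add: powr_minus field_simps)
  also have "\<dots> \<le> ?a powr p / p + ?b powr q / q"
    using ab by (intro Youngs_inequality p q(1) pq) auto
  also have "?a powr p = c * a powr p"
    using p c ab by (simp add: powr_mult powr_powr)
  also have "?b powr q = c powr (1 - q) * b powr q"
  proof -
    have "- (1 / p) * q = 1 - q" using q(2) p by (simp add: field_simps)
    then show ?thesis using c ab by (simp add: powr_mult powr_powr)
  qed
  finally show ?thesis by (simp add: algebra_simps)
qed

text \<open>The choice of \<open>c\<close> that minimizes the right-hand side of the scaled Young inequality.\<close>
lemma Young_bound_optimal:
  fixes p q \<alpha> \<beta> :: real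
  assumes p: "p > 1" and pq: "1 / p + 1 / q = 1" and \<alpha>: "\<alpha> > 0" and \<beta>: "\<beta> > 0"
  defines "c \<equiv> \<alpha> powr (1 / p - 1) * \<beta> powr (1 / q)"
  shows "c / p * \<alpha> + c powr (1 - q) / q * \<beta> = \<alpha> powr (1 / p) * \<beta> powr (1 / q)"
proof -
  note q = conjugate_exponents[OF p pq]
  have 1: "c * \<alpha> = \<alpha> powr (1 / p) * \<beta> powr (1 / q)"
    unfolding c_def using \<alpha> by (simp add: powr_diff algebra_simps)
  have "(1 / p - 1) * (1 - q) = 1 / p" "1 / q * (1 - q) = 1 / q - 1"
    using p q by (simp_all add: field_simps)
  then have "c powr (1 - q) = \<alpha> powr (1 / p) * \<beta> powr (1 / q - 1)"
    unfolding c_def using \<alpha> \<beta> by (simp add: powr_mult powr_powr)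
  then have 2: "c powr (1 - q) * \<beta> = \<alpha> powr (1 / p) * \<beta> powr (1 / q)"
    using \<beta> by (simp add: powr_diff)
  have "c / p * \<alpha> + c powr (1 - q) / q * \<beta> = (1 / p + 1 / q) * (\<alpha> powr (1 / p) * \<beta> powr (1 / q))"
    using 1 2 by (simp add: algebra_simps)
  then show ?thesis using pq by simp
qed

lemma choquet_real_Hoelder_pos:
  assumes mon: "monotone_measure M \<mu>" and sub: "submodular M \<mu>" and A: "A \<in> sets M"
    and p: "p > 1" and pq: "1 / p + 1 / q = 1"
    and F: "F \<in> borel_measurable M" "\<forall>x\<in>space M. F x \<ge> 0"
    and G: "G \<in> borel_measurable M" "\<forall>x\<in>space M. G x \<ge> 0"
    and \<alpha>: "\<alpha> > 0" "choquet_real M \<mu> A (\<lambda>x. F x powr p) \<le> ennreal \<alpha>"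
    and \<beta>: "\<beta> > 0" "choquet_real M \<mu> A (\<lambda>x. G x powr q) \<le> ennreal \<beta>"
  shows "choquet_real M \<mu> A (\<lambda>x. F x * G x) \<le> ennreal (\<alpha> powr (1 / p) * \<beta> powr (1 / q))"
proof -
  note q = conjugate_exponents[OF p pq]
  note [measurable] = F(1) G(1)
  define c where "c = \<alpha> powr (1 / p - 1) * \<beta> powr (1 / q)"
  have c: "c > 0" "c / p > 0" "c powr (1 - q) / q > 0" unfolding c_def using \<alpha> \<beta> p q by auto
  have "choquet_real M \<mu> A (\<lambda>x. F x * G x)
      \<le> choquet_real M \<mu> A (\<lambda>x. c / p * F x powr p + c powr (1 - q) / q * G x powr q)"
    using F(2) G(2) c by (intro choquet_real_mono[OF mon A] ballI Youngs_inequality_scaled p pq) auto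
  also have "\<dots> \<le> choquet_real M \<mu> A (\<lambda>x. c / p * F x powr p)
      + choquet_real M \<mu> A (\<lambda>x. c powr (1 - q) / q * G x powr q)"
    using c by (intro choquet_real_subadditive[OF mon sub A] ballI mult_nonneg_nonneg) auto
  also have "\<dots> = ennreal (c / p) * choquet_real M \<mu> A (\<lambda>x. F x powr p)
      + ennreal (c powr (1 - q) / q) * choquet_real M \<mu> A (\<lambda>x. G x powr q)"
  proof -
    have "(\<lambda>x. F x powr p) \<in> borel_measurable M" "(\<lambda>x. G x powr q) \<in> borel_measurable M"
      by measurable
    then show ?thesis by (simp only: choquet_real_cmult[OF mon A _ c(2)] choquet_real_cmult[OF mon A _ c(3)])
  qed
  also have "\<dots> \<le> ennreal (c / p) * ennreal \<alpha> + ennreal (c powr (1 - q) / q) * ennreal \<beta>"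
    using \<alpha> \<beta> by (intro add_mono mult_left_mono) auto
  also have "\<dots> = ennreal (c / p * \<alpha> + c powr (1 - q) / q * \<beta>)"
    using c \<alpha> \<beta>
    by (simp only: ennreal_mult'[symmetric] ennreal_plus[symmetric] less_imp_le mult_nonneg_nonneg)
  also have "\<dots> = ennreal (\<alpha> powr (1 / p) * \<beta> powr (1 / q))"
    unfolding c_def using Young_bound_optimal[OF p pq \<alpha>(1) \<beta>(1)] by simp
  finally show ?thesis .
qed

lemma choquet_real_Hoelder:
  assumes mon: "monotone_measure M \<mu>" and sub: "submodular M \<mu>" and A: "A \<in> sets M"
    and p: "p > 1" and pq: "1 / p + 1 / q = 1"
    and F: "F \<in> borel_measurable M" "\<forall>x\<in>space M. F x \<ge> 0"
    and G: "G \<in> borel_measurable M" "\<forall>x\<in>space M. G x \<ge> 0"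
    and \<alpha>: "\<alpha> \<ge> 0" "choquet_real M \<mu> A (\<lambda>x. F x powr p) \<le> ennreal \<alpha>"
    and \<beta>: "\<beta> \<ge> 0" "choquet_real M \<mu> A (\<lambda>x. G x powr q) \<le> ennreal \<beta>"
  shows "choquet_real M \<mu> A (\<lambda>x. F x * G x) \<le> ennreal (\<alpha> powr (1 / p) * \<beta> powr (1 / q))"
proof -
  note q = conjugate_exponents[OF p pq]
  have "((\<lambda>d. ennreal ((\<alpha> + d) powr (1 / p) * (\<beta> + d) powr (1 / q)))
      \<longlongrightarrow> ennreal ((\<alpha> + 0) powr (1 / p) * (\<beta> + 0) powr (1 / q))) (at_right 0)"
    using p q(1) eventually_at_right_less[of "0::real"]
    by (intro tendsto_ennrealI tendsto_mult tendsto_powr' tendsto_add tendsto_const tendsto_ident_at)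
       (auto elim!: eventually_mono intro: add_nonneg_nonneg \<alpha> \<beta>)
  moreover have "\<forall>\<^sub>F d in at_right 0. choquet_real M \<mu> A (\<lambda>x. F x * G x)
      \<le> ennreal ((\<alpha> + d) powr (1 / p) * (\<beta> + d) powr (1 / q))"
    using eventually_at_right_less[of "0::real"]
  proof eventually_elim
    case (elim d)
    show ?case
      using \<alpha> \<beta> elim order_trans[OF \<alpha>(2)] order_trans[OF \<beta>(2)]
      by (intro choquet_real_Hoelder_pos[OF mon sub A p pq F G]) auto
  qed
  ultimately show ?thesis
    by (intro tendsto_le[OF trivial_limit_at_right_real _ tendsto_const]) simp_all
qed

lemma choquet_real_Hoelder_roots:
  assumes mon: "monotone_measure M \<mu>" and sub: "submodular M \<mu>" and A: "A \<in> sets M"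
    and p: "p > 1" and pq: "1 / p + 1 / q = 1"
    and P: "P \<in> borel_measurable M" "\<forall>x\<in>space M. P x \<ge> 0"
    and Q: "Q \<in> borel_measurable M" "\<forall>x\<in>space M. Q x \<ge> 0"
    and \<alpha>: "\<alpha> \<ge> 0" "choquet_real M \<mu> A P \<le> ennreal \<alpha>"
    and \<beta>: "\<beta> \<ge> 0" "choquet_real M \<mu> A Q \<le> ennreal \<beta>"
  shows "choquet_real M \<mu> A (\<lambda>x. P x powr (1 / p) * Q x powr (1 / q))
    \<le> ennreal (\<alpha> powr (1 / p) * \<beta> powr (1 / q))"
proof -
  note q = conjugate_exponents[OF p pq]
  note [measurable] = P(1) Q(1)
  have P_meas: "(\<lambda>x. P x powr (1 / p)) \<in> borel_measurable M"
    and Q_meas: "(\<lambda>x. Q x powr (1 / q)) \<in> borel_measurable M"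
    by measurable
  have "choquet_real M \<mu> A (\<lambda>x. (P x powr (1 / p)) powr p) = choquet_real M \<mu> A P"
    using P(2) p by (intro choquet_real_cong) (simp add: powr_powr)
  then have P_le: "choquet_real M \<mu> A (\<lambda>x. (P x powr (1 / p)) powr p) \<le> ennreal \<alpha>"
    using \<alpha>(2) by simp
  have "choquet_real M \<mu> A (\<lambda>x. (Q x powr (1 / q)) powr q) = choquet_real M \<mu> A Q"
    using Q(2) q(1) by (intro choquet_real_cong) (simp add: powr_powr)
  then have Q_le: "choquet_real M \<mu> A (\<lambda>x. (Q x powr (1 / q)) powr q) \<le> ennreal \<beta>"
    using \<beta>(2) by simp
  show ?thesis
    by (rule choquet_real_Hoelder[OF mon sub A p pq P_meas _ Q_meas _ \<alpha>(1) P_le \<beta>(1) Q_le]) simp_all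
qed

lemma choquet_mono:
  assumes mon: "monotone_measure M \<mu>" and A: "A \<in> sets M"
    and [measurable]: "F \<in> borel_measurable M" "H \<in> borel_measurable M"
    and le: "\<forall>x\<in>space M. F x \<le> H x"
  shows "choquet M \<mu> A F \<le> choquet M \<mu> A H"
  unfolding choquet_def
proof (intro nn_integral_mono mult_left_mono monotone_measureD[OF mon])
  fix t :: real
  show "A \<inter> {x \<in> space M. ennreal t \<le> F x} \<in> sets M" "A \<inter> {x \<in> space M. ennreal t \<le> H x} \<in> sets M"
    using A by measurable
  show "A \<inter> {x \<in> space M. ennreal t \<le> F x} \<subseteq> A \<inter> {x \<in> space M. ennreal t \<le> H x}"
    using le order_trans by blast
qed simp

lemma choquet_cong:
  assumes "\<forall>x\<in>space M. F x = H x"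
  shows "choquet M \<mu> A F = choquet M \<mu> A H"
proof -
  have "{x \<in> space M. ennreal t \<le> F x} = {x \<in> space M. ennreal t \<le> H x}" for t
    using assms by auto
  then show ?thesis unfolding choquet_def by simp
qed

lemma emeasure_lborel_Ici: "emeasure lborel {a::real..} = \<infinity>"
proof -
  have "of_nat n \<le> emeasure lborel {a..}" for n :: nat
    using emeasure_mono[of "{a..a + real n}" "{a..}" lborel] by (simp add: ennreal_of_nat_eq_real_of_nat)
  then have "(SUP n. of_nat n :: ennreal) \<le> emeasure lborel {a..}" by (rule SUP_least)
  then show ?thesis by (simp add: ennreal_SUP_of_nat_eq_top top_unique)
qed

lemma choquet_finite_imp_null:
  assumes mon: "monotone_measure M \<mu>" and A: "A \<in> sets M" and Z: "Z \<in> sets M"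
    and [measurable]: "G \<in> borel_measurable M" and top: "\<forall>x\<in>Z. G x = \<infinity>"
    and fin: "choquet M \<mu> A G < \<infinity>"
  shows "\<mu> (A \<inter> Z) = 0"
proof (rule ccontr)
  assume nz: "\<mu> (A \<inter> Z) \<noteq> 0"
  have "(\<integral>\<^sup>+(t::real). indicator {0..} t * \<mu> (A \<inter> Z) \<partial>lborel) \<le> choquet M \<mu> A G"
    unfolding choquet_def
  proof (intro nn_integral_mono mult_left_mono monotone_measureD[OF mon])
    fix t :: real
    show "A \<inter> Z \<in> sets M" using A Z by simp
    show "A \<inter> {x \<in> space M. ennreal t \<le> G x} \<in> sets M" using A by measurable
    show "A \<inter> Z \<subseteq> A \<inter> {x \<in> space M. ennreal t \<le> G x}"
      using top sets.sets_into_space[OF Z] by auto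
  qed simp
  moreover have "(\<integral>\<^sup>+(t::real). indicator {0..} t * \<mu> (A \<inter> Z) \<partial>lborel) = \<infinity>"
    using nz by (simp add: nn_integral_multc emeasure_lborel_Ici ennreal_mult_top)
  ultimately show False using fin by (simp add: top_unique)
qed

lemma choquet_recip_pow_finite_imp_null:
  assumes mon: "monotone_measure M \<mu>" and A: "A \<in> sets M"
    and [measurable]: "w \<in> borel_measurable M"
    and "choquet M \<mu> A (\<lambda>x. recip_pow q (w x)) < \<infinity>"
  shows "\<mu> (A \<inter> {x\<in>space M. w x = 0}) = 0"
proof (rule choquet_finite_imp_null[OF mon A])
  show "{x\<in>space M. w x = 0} \<in> sets M" by measurable
  show "(\<lambda>x. recip_pow q (w x)) \<in> borel_measurable M" unfolding recip_pow_def by measurable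
  show "\<forall>x\<in>{x\<in>space M. w x = 0}. recip_pow q (w x) = \<infinity>" unfolding recip_pow_def by simp
qed fact

lemma choquet_real_le_of_null_outside:
  assumes mon: "monotone_measure M \<mu>" and sub: "submodular M \<mu>" and A: "A \<in> sets M"
    and Z: "Z \<in> sets M" "\<mu> (A \<inter> Z) = 0"
    and F: "F \<in> borel_measurable M" "\<forall>x\<in>space M. F x \<ge> 0"
    and H: "H \<in> borel_measurable M" "\<forall>x\<in>space M. H x \<ge> 0"
    and le: "\<forall>x\<in>space M - Z. F x \<le> H x"
  shows "choquet_real M \<mu> A F \<le> choquet_real M \<mu> A H"
proof -
  note [measurable] = F(1) H(1) Z(1)
  define F\<^sub>Z where "F\<^sub>Z x = (if x \<in> Z then F x else 0)" for x
  have [measurable]: "F\<^sub>Z \<in> borel_measurable M" unfolding F\<^sub>Z_def by measurable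
  have "choquet_real M \<mu> A F \<le> choquet_real M \<mu> A (\<lambda>x. H x + F\<^sub>Z x)"
    using le H(2) by (intro choquet_real_mono[OF mon A]) (auto simp: F\<^sub>Z_def)
  also have "\<dots> \<le> choquet_real M \<mu> A H + choquet_real M \<mu> A F\<^sub>Z"
    using F(2) H(2) by (intro choquet_real_subadditive[OF mon sub A]) (auto simp: F\<^sub>Z_def)
  also have "choquet_real M \<mu> A F\<^sub>Z = 0"
  proof (rule choquet_real_null)
    fix t :: real assume "t > 0"
    then have "\<mu> (A \<inter> {x\<in>space M. t \<le> F\<^sub>Z x}) \<le> \<mu> (A \<inter> Z)"
      using A by (intro monotone_measureD[OF mon]) (auto simp: F\<^sub>Z_def split: if_splits)
    then show "\<mu> (A \<inter> {x\<in>space M. t \<le> F\<^sub>Z x}) = 0" using Z(2) by simp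
  qed
  finally show ?thesis by simp
qed

lemma Hpq_infinity: "ennreal (2 powr (1 / p)) * Hpq p q a b \<infinity> = \<infinity>"
  unfolding Hpq_def by (simp add: ennreal_mult_top)

lemma Hpq_ennreal:
  assumes "a > 0" "b > 0" "r \<ge> 0"
  shows "ennreal (2 powr (1 / p)) * Hpq p q a b (ennreal r)
    = ennreal ((2 * a * b) powr (1 / p) * r powr (1 / q))"
proof -
  have "(2 * a * b) powr (1 / p) = 2 powr (1 / p) * (a * b) powr (1 / p)"
    using assms by (simp add: powr_mult mult.assoc)
  then show ?thesis
    unfolding Hpq_def using assms by (simp add: ennreal_mult[symmetric] mult.assoc)
qed

lemma recip_pow_pos: "s > 0 \<Longrightarrow> recip_pow q s = ennreal (s powr (1 - q))"
  unfolding recip_pow_def by (simp add: powr_diff)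

lemma powr_Hoelder_factors:
  fixes f w p q :: real
  assumes p: "p > 1" and pq: "1 / p + 1 / q = 1" and "w > 0" "f \<ge> 0"
  shows "(f powr p * w) powr (1 / p) * (w powr (1 - q)) powr (1 / q) = f"
proof -
  note q = conjugate_exponents[OF p pq]
  have "(f powr p * w) powr (1 / p) * (w powr (1 - q)) powr (1 / q)
      = f * w powr (1 / p + (1 - q) / q)"
    using assms q(1) by (simp add: powr_mult powr_powr powr_add)
  also have "1 / p + (1 - q) / q = 0"
    using pq q(1) by (simp add: diff_divide_distrib)
  finally show ?thesis using assms(3) by simp
qed

lemma powr_constant_weight:
  fixes f w p q \<gamma> :: real
  assumes p: "p > 1" and pq: "1 / p + 1 / q = 1" and w: "w > 0" and f: "f \<ge> 0"
    and \<gamma>: "w powr q * f powr p = \<gamma>"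
  shows "f = \<gamma> powr (1 / p) * w powr (1 - q)" "f powr p * w = \<gamma> * w powr (1 - q)"
proof -
  note q = conjugate_exponents[OF p pq]
  have \<gamma>0: "\<gamma> \<ge> 0" using \<gamma> by (metis powr_ge_zero zero_le_mult_iff)
  have fp: "f powr p = \<gamma> / w powr q" using \<gamma> w by (simp add: field_simps)
  have wq: "w powr (1 - q) = 1 / w powr (q - 1)" by (simp add: powr_minus_divide[symmetric])
  have "f = (f powr p) powr (1 / p)" using f p by (simp add: powr_powr)
  also have "\<dots> = \<gamma> powr (1 / p) / (w powr q) powr (1 / p)"
    unfolding fp using \<gamma>0 w by (simp add: powr_divide)
  also have "(w powr q) powr (1 / p) = w powr (q - 1)" using q(2) by (simp add: powr_powr)
  finally show "f = \<gamma> powr (1 / p) * w powr (1 - q)" using wq by simp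
  have "f powr p * w = \<gamma> / (w powr q / w)" unfolding fp using w by simp
  also have "w powr q / w = w powr (q - 1)" using w by (simp add: powr_diff)
  finally show "f powr p * w = \<gamma> * w powr (1 - q)" using wq by simp
qed

lemma choquet_real_cross_weights:
  assumes mon: "monotone_measure M \<mu>" and A: "A \<in> sets M"
    and P: "P \<in> borel_measurable M" and Q: "Q \<in> borel_measurable M"
    and a: "a > 0" "choquet_real M \<mu> A P = ennreal a"
    and b: "b > 0" "choquet_real M \<mu> A Q = ennreal b"
  shows "choquet_real M \<mu> A (\<lambda>x. b * P x) + choquet_real M \<mu> A (\<lambda>x. a * Q x) = ennreal (2 * a * b)"
  using a b P Q by (simp add: choquet_real_cmult[OF mon A] ennreal_mult[symmetric] flip: ennreal_plus)

lemma choquet_real_recip_weight_le: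
  assumes mon: "monotone_measure M \<mu>" and A: "A \<in> sets M"
    and w: "w \<in> borel_measurable M" "\<forall>x\<in>space M. w x \<ge> 0"
  shows "choquet_real M \<mu> A (\<lambda>x. if w x > 0 then w x powr (1 - q) else 0)
    \<le> choquet M \<mu> A (\<lambda>x. recip_pow q (w x))"
proof -
  note [measurable] = w(1)
  have "choquet_real M \<mu> A (\<lambda>x. if w x > 0 then w x powr (1 - q) else 0)
      = choquet M \<mu> A (\<lambda>x. ennreal (if w x > 0 then w x powr (1 - q) else 0))"
    by (rule choquet_eq_choquet_real[symmetric]) simp
  also have "\<dots> \<le> choquet M \<mu> A (\<lambda>x. recip_pow q (w x))"
    using w(2) unfolding recip_pow_def
    by (intro choquet_mono[OF mon A]) (measurable, auto simp: powr_minus_divide[symmetric])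
  finally show ?thesis .
qed

lemma choquet_recip_pow_eq:
  assumes "\<forall>x\<in>space M. w x > 0"
  shows "choquet M \<mu> A (\<lambda>x. recip_pow q (w x)) = choquet_real M \<mu> A (\<lambda>x. w x powr (1 - q))"
proof -
  have "choquet M \<mu> A (\<lambda>x. recip_pow q (w x)) = choquet M \<mu> A (\<lambda>x. ennreal (w x powr (1 - q)))"
    using assms by (intro choquet_cong) (simp add: recip_pow_pos)
  also have "\<dots> = choquet_real M \<mu> A (\<lambda>x. w x powr (1 - q))"
    by (rule choquet_eq_choquet_real) simp
  finally show ?thesis .
qed

lemma choquet_weighted_Hoelder:
  fixes f g h :: "'a \<Rightarrow> real"
  assumes mon: "monotone_measure M \<mu>" and sub: "submodular M \<mu>" and A: "A \<in> sets M"
    and p: "p > 1" and pq: "1 / p + 1 / q = 1"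
    and f: "f \<in> borel_measurable M" "\<forall>x\<in>space M. f x \<ge> 0"
    and g: "g \<in> borel_measurable M" "\<forall>x\<in>space M. g x \<ge> 0"
    and h: "h \<in> borel_measurable M" "\<forall>x\<in>space M. h x \<ge> 0"
    and a: "a > 0" "choquet_real M \<mu> A (\<lambda>x. g x * f x powr p) = ennreal a"
    and b: "b > 0" "choquet_real M \<mu> A (\<lambda>x. h x * f x powr p) = ennreal b"
  shows "choquet_real M \<mu> A f
    \<le> ennreal (2 powr (1 / p)) * Hpq p q a b (choquet M \<mu> A (\<lambda>x. recip_pow q (b * g x + a * h x)))"
proof -
  note [measurable] = f(1) g(1) h(1)
  define w where "w x = b * g x + a * h x" for x
  have w: "w \<in> borel_measurable M" "\<forall>x\<in>space M. w x \<ge> 0" unfolding w_def using g h a b by auto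
  define I where "I = choquet M \<mu> A (\<lambda>x. recip_pow q (w x))"
  show ?thesis
    unfolding w_def[symmetric] I_def[symmetric]
  proof (cases I)
    case (real r)
    define Z where "Z = {x\<in>space M. w x = 0}"
    have Z: "Z \<in> sets M" unfolding Z_def using w(1) by measurable
    have "\<mu> (A \<inter> Z) = 0"
      using real w(1) unfolding Z_def I_def by (intro choquet_recip_pow_finite_imp_null[OF mon A, where q = q]) simp_all
    define R where "R x = (if w x > 0 then w x powr (1 - q) else 0)" for x
    have R_meas: "R \<in> borel_measurable M" unfolding R_def using w(1) by measurable
    have R_nonneg: "\<forall>x\<in>space M. R x \<ge> 0" unfolding R_def by simp
    have R_le: "choquet_real M \<mu> A R \<le> ennreal r"
      using choquet_real_recip_weight_le[OF mon A w, of q] real unfolding R_def I_def by simp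
    have "choquet_real M \<mu> A (\<lambda>x. f x powr p * w x)
        = choquet_real M \<mu> A (\<lambda>x. b * (g x * f x powr p) + a * (h x * f x powr p))"
      by (intro choquet_real_cong) (simp add: w_def algebra_simps)
    also have "\<dots> \<le> choquet_real M \<mu> A (\<lambda>x. b * (g x * f x powr p)) + choquet_real M \<mu> A (\<lambda>x. a * (h x * f x powr p))"
      using f g h a b by (intro choquet_real_subadditive[OF mon sub A]) auto
    also have "\<dots> = ennreal (2 * a * b)"
      using a b by (intro choquet_real_cross_weights[OF mon A]) auto
    finally have P_le: "choquet_real M \<mu> A (\<lambda>x. f x powr p * w x) \<le> ennreal (2 * a * b)" .
    have "choquet_real M \<mu> A f
        \<le> choquet_real M \<mu> A (\<lambda>x. (f x powr p * w x) powr (1 / p) * R x powr (1 / q))"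
      using \<open>\<mu> (A \<inter> Z) = 0\<close> f w R_meas R_nonneg
      by (intro choquet_real_le_of_null_outside[OF mon sub A Z])
         (auto simp: Z_def R_def powr_Hoelder_factors[OF p pq] less_le)
    also have "\<dots> \<le> ennreal ((2 * a * b) powr (1 / p) * r powr (1 / q))"
      using P_le R_le R_meas R_nonneg w a b real by (intro choquet_real_Hoelder_roots[OF mon sub A p pq]) auto
    also have "\<dots> = ennreal (2 powr (1 / p)) * Hpq p q a b I"
      unfolding real(2) by (rule Hpq_ennreal[symmetric, OF a(1) b(1) real(1)])
    finally show "choquet_real M \<mu> A f \<le> ennreal (2 powr (1 / p)) * Hpq p q a b I" .
  qed (use Hpq_infinity[of p q a b] in simp)
qed

lemma constant_weight_pos:
  fixes f g h :: "'a \<Rightarrow> real"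
  assumes mon: "monotone_measure M \<mu>"
    and f: "\<forall>x\<in>space M. f x \<ge> 0" and g: "\<forall>x\<in>space M. g x \<ge> 0" and h: "\<forall>x\<in>space M. h x \<ge> 0"
    and a: "a > 0" "choquet_real M \<mu> A (\<lambda>x. g x * f x powr p) = ennreal a" and b: "b > 0"
    and \<gamma>: "\<forall>x\<in>space M. (b * g x + a * h x) powr q * f x powr p = \<gamma>"
  shows "\<gamma> > 0" "\<forall>x\<in>space M. b * g x + a * h x > 0"
proof -
  show \<gamma>_pos: "\<gamma> > 0"
  proof (rule ccontr)
    assume "\<not> \<gamma> > 0"
    have zero: "g x * f x powr p = 0" if x: "x \<in> space M" for x
    proof -
      have "(b * g x + a * h x) powr q * f x powr p \<le> 0" using \<gamma> x \<open>\<not> \<gamma> > 0\<close> by auto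
      moreover have "(b * g x + a * h x) powr q * f x powr p \<ge> 0" by simp
      ultimately have "b * g x + a * h x = 0 \<or> f x = 0" by simp
      moreover have "b * g x + a * h x = 0 \<Longrightarrow> g x = 0"
        using g h a(1) b x by (simp add: add_nonneg_eq_0_iff)
      ultimately show ?thesis by auto
    qed
    have "choquet_real M \<mu> A (\<lambda>x. g x * f x powr p) = 0"
    proof (rule choquet_real_null)
      fix t :: real assume "t > 0"
      then have "A \<inter> {x\<in>space M. t \<le> g x * f x powr p} = {}" by (auto simp: zero)
      then show "\<mu> (A \<inter> {x\<in>space M. t \<le> g x * f x powr p}) = 0"
        using monotone_measure_empty[OF mon] by simp
    qed
    then show False using a by simp
  qed
  show "\<forall>x\<in>space M. b * g x + a * h x > 0"
  proof
    fix x assume x: "x \<in> space M"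
    have "b * g x + a * h x \<noteq> 0" using \<gamma>[rule_format, OF x] \<gamma>_pos by auto
    moreover have "b * g x + a * h x \<ge> 0" using g h a(1) b x by simp
    ultimately show "b * g x + a * h x > 0" by simp
  qed
qed

lemma Hpq_le_of_le:
  assumes p: "p > 1" and pq: "1 / p + 1 / q = 1" and a: "a > 0" and b: "b > 0" and \<gamma>: "\<gamma> > 0"
    and le: "ennreal (2 * a * b) \<le> ennreal \<gamma> * I"
  shows "ennreal (2 powr (1 / p)) * Hpq p q a b I \<le> ennreal (\<gamma> powr (1 / p)) * I"
proof (cases I)
  case (real r)
  have "ennreal (2 * a * b) \<le> ennreal (\<gamma> * r)"
    using le unfolding real(2) ennreal_mult[OF less_imp_le[OF \<gamma>] real(1)] .
  then have le: "2 * a * b \<le> \<gamma> * r"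
    using \<gamma> real(1) by (simp add: ennreal_le_iff)
  have r_pos: "r > 0"
  proof (rule ccontr)
    assume "\<not> r > 0"
    then have "2 * a * b \<le> 0" using le real(1) by simp
    then show False using mult_pos_pos[OF a b] by simp
  qed
  have "(2 * a * b) powr (1 / p) * r powr (1 / q) \<le> (\<gamma> * r) powr (1 / p) * r powr (1 / q)"
    using le a b p by (intro mult_right_mono powr_mono2) auto
  also have "\<dots> = \<gamma> powr (1 / p) * r"
    using \<gamma> r_pos pq by (simp add: powr_mult powr_add[symmetric])
  finally have "ennreal ((2 * a * b) powr (1 / p) * r powr (1 / q)) \<le> ennreal (\<gamma> powr (1 / p) * r)"
    by (rule ennreal_leI)
  then show ?thesis
    unfolding real(2) Hpq_ennreal[OF a b real(1)] by (simp add: ennreal_mult real(1))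
next
  case top
  then show ?thesis using \<gamma> by (simp add: Hpq_infinity ennreal_mult_top)
qed

lemma choquet_weighted_Hoelder_attained:
  fixes f g h :: "'a \<Rightarrow> real"
  assumes mon: "monotone_measure M \<mu>" and A: "A \<in> sets M"
    and p: "p > 1" and pq: "1 / p + 1 / q = 1"
    and f: "f \<in> borel_measurable M" "\<forall>x\<in>space M. f x \<ge> 0"
    and g: "g \<in> borel_measurable M" "\<forall>x\<in>space M. g x \<ge> 0"
    and h: "h \<in> borel_measurable M" "\<forall>x\<in>space M. h x \<ge> 0"
    and a: "a > 0" "choquet_real M \<mu> A (\<lambda>x. g x * f x powr p) = ennreal a"
    and b: "b > 0" "choquet_real M \<mu> A (\<lambda>x. h x * f x powr p) = ennreal b"
    and \<gamma>: "\<forall>x\<in>space M. (b * g x + a * h x) powr q * f x powr p = \<gamma>"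
    and cond: "modular M \<mu> \<or> comonotone (space M) (\<lambda>x. g x * f x powr p) (\<lambda>x. h x * f x powr p)"
  shows "ennreal (2 powr (1 / p)) * Hpq p q a b (choquet M \<mu> A (\<lambda>x. recip_pow q (b * g x + a * h x)))
    \<le> choquet_real M \<mu> A f"
proof -
  note [measurable] = f(1) g(1) h(1)
  note pos = constant_weight_pos[OF mon f(2) g(2) h(2) a b(1) \<gamma>]
  note weight = powr_constant_weight[OF p pq _ _ \<gamma>[rule_format]]
  define R where "R x = (b * g x + a * h x) powr (1 - q)" for x
  have R: "R \<in> borel_measurable M" unfolding R_def by measurable
  have I: "choquet M \<mu> A (\<lambda>x. recip_pow q (b * g x + a * h x)) = choquet_real M \<mu> A R"
    unfolding R_def using pos(2) by (rule choquet_recip_pow_eq)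
  have cond': "modular M \<mu> \<or> comonotone (space M) (\<lambda>x. b * (g x * f x powr p)) (\<lambda>x. a * (h x * f x powr p))"
    using cond comonotone_transform[of "space M" "\<lambda>x. g x * f x powr p" "\<lambda>x. h x * f x powr p"
        "\<lambda>x. b * (g x * f x powr p)" "\<lambda>x. a * (h x * f x powr p)"] a(1) b(1)
    by auto
  have "ennreal (2 * a * b)
      = choquet_real M \<mu> A (\<lambda>x. b * (g x * f x powr p)) + choquet_real M \<mu> A (\<lambda>x. a * (h x * f x powr p))"
    using a b by (intro choquet_real_cross_weights[symmetric, OF mon A]) auto
  also have "\<dots> \<le> choquet_real M \<mu> A (\<lambda>x. b * (g x * f x powr p) + a * (h x * f x powr p))"
    using f g h a b by (intro choquet_real_superadditive[OF mon A _ _ _ _ cond']) auto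
  also have "\<dots> = choquet_real M \<mu> A (\<lambda>x. \<gamma> * R x)"
    using pos(2) f(2) weight(2) by (intro choquet_real_cong) (auto simp: R_def algebra_simps)
  also have "\<dots> = ennreal \<gamma> * choquet_real M \<mu> A R"
    by (rule choquet_real_cmult[OF mon A R pos(1)])
  finally have two_ab: "ennreal (2 * a * b) \<le> ennreal \<gamma> * choquet_real M \<mu> A R" .
  have "choquet_real M \<mu> A f = choquet_real M \<mu> A (\<lambda>x. \<gamma> powr (1 / p) * R x)"
    using pos(2) f(2) weight(1) by (intro choquet_real_cong) (auto simp: R_def)
  also have "\<dots> = ennreal (\<gamma> powr (1 / p)) * choquet_real M \<mu> A R"
    using pos(1) by (simp add: choquet_real_cmult[OF mon A R])
  finally show ?thesis
    unfolding I using Hpq_le_of_le[OF p pq a(1) b(1) pos(1) two_ab] by simp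
qed

theorem mainTheorem7:
  fixes M :: "'a measure" and \<mu> :: "'a set \<Rightarrow> ennreal" and A :: "'a set"
    and p q :: real and f g h :: "'a \<Rightarrow> real"
  assumes mon: "monotone_measure M \<mu>" and sub: "submodular M \<mu>"
    and A: "A \<in> sets M"
    and p: "p > 1" and pq: "1 / p + 1 / q = 1"
    and f: "f \<in> borel_measurable M" "\<forall>x\<in>space M. f x \<ge> 0"
    and g: "g \<in> borel_measurable M" "\<forall>x\<in>space M. g x \<ge> 0"
    and h: "h \<in> borel_measurable M" "\<forall>x\<in>space M. h x \<ge> 0"
    and a_fin: "0 < choquet M \<mu> A (\<lambda>x. ennreal (g x * f x powr p))"
               "choquet M \<mu> A (\<lambda>x. ennreal (g x * f x powr p)) < \<infinity>"
    and b_fin: "0 < choquet M \<mu> A (\<lambda>x. ennreal (h x * f x powr p))"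
               "choquet M \<mu> A (\<lambda>x. ennreal (h x * f x powr p)) < \<infinity>"
  shows "let a = enn2real (choquet M \<mu> A (\<lambda>x. ennreal (g x * f x powr p)));
             b = enn2real (choquet M \<mu> A (\<lambda>x. ennreal (h x * f x powr p)));
             H = Hpq p q a b (choquet M \<mu> A (\<lambda>x. recip_pow q (b * g x + a * h x)))
         in choquet M \<mu> A (\<lambda>x. ennreal (f x)) \<le> ennreal (2 powr (1 / p)) * H
          \<and> ((\<exists>\<gamma>\<ge>0. \<forall>x\<in>space M. (b * g x + a * h x) powr q * f x powr p = \<gamma>)
               \<and> (modular M \<mu> \<or>
                  comonotone (space M) (\<lambda>x. g x * f x powr p) (\<lambda>x. h x * f x powr p))
             \<longrightarrow> choquet M \<mu> A (\<lambda>x. ennreal (f x)) = ennreal (2 powr (1 / p)) * H)"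
proof -
  define a where "a = enn2real (choquet M \<mu> A (\<lambda>x. ennreal (g x * f x powr p)))"
  define b where "b = enn2real (choquet M \<mu> A (\<lambda>x. ennreal (h x * f x powr p)))"
  have ga: "choquet_real M \<mu> A (\<lambda>x. g x * f x powr p) = ennreal a" "a > 0"
    using a_fin g(2) f(2) choquet_eq_choquet_real[of M "\<lambda>x. g x * f x powr p"]
    by (auto simp: a_def enn2real_positive_iff)
  have hb: "choquet_real M \<mu> A (\<lambda>x. h x * f x powr p) = ennreal b" "b > 0"
    using b_fin h(2) f(2) choquet_eq_choquet_real[of M "\<lambda>x. h x * f x powr p"]
    by (auto simp: b_def enn2real_positive_iff)
  have "choquet M \<mu> A (\<lambda>x. ennreal (f x)) = choquet_real M \<mu> A f"
    using f(2) by (rule choquet_eq_choquet_real)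
  moreover note choquet_weighted_Hoelder[OF mon sub A p pq f g h ga(2,1) hb(2,1)]
  moreover note choquet_weighted_Hoelder_attained[OF mon A p pq f g h ga(2,1) hb(2,1)]
  ultimately show ?thesis
    unfolding Let_def a_def[symmetric] b_def[symmetric] by (auto intro: order.antisym)
qed

end
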